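(* Let $G=(V,E)$ be a finite simple graph with at least one edge and no isolated vertices. The following are equivalent: (1) $G$ is uniformly dense; (2) $\operatorname{rank}(L(G))-\operatorname{rank}(L(G|A))\le \frac{|E|-|A|}{\rho(G)}$ for all nonempty $A\subseteq E$; (3) $\frac{n_0(L^1(G|A))}{|A|}\le\frac{n_0(L^1(G))}{|E|}$ for all nonempty $A\subseteq E$.
   Context: For $A\subseteq E$, $c(A)$ is the number of components of $(V,A)$, $\operatorname{rank}(A)=|V|-c(A)$, $\rho(A)=|A|/\operatorname{rank}(A)$, $\rho(G)=\rho(E)$; $G$ is uniformly dense if $\rho(A)\le\rho(G)$ for all nonempty $A$. $G|A$ is the graph obtained from $(V,A)$ by removing all isolated vertices. The normalized Laplacian $L(G)$ acts on functions $f:V\to\mathbb{R}$ by $Lf(v)=f(v)-\frac{1}{\deg v}\sum_{u:\{u,v\}\in E}f(u)$ (matrix $I-AD^{-1}$); $\operatorname{rank}$ of $L$ is the linear-algebraic rank. Fix an arbitrary orientation of each edge (an input and an output endpoint). The edge Laplacian $L^1(G)$ acts on $\gamma:E\to\mathbb{R}$ by, for $e$ with input $v$ and output $w$, $L^1\gamma(e)=\frac{\sum_{e_1:\,v\text{ input of }e_1}\gamma(e_1)-\sum_{e_2:\,v\text{ output of }e_2}\gamma(e_2)}{\deg v}-\frac{\sum_{e_1':\,w\text{ input of }e_1'}\gamma(e_1')-\sum_{e_2':\,w\text{ output of }e_2'}\gamma(e_2')}{\deg w}$. $n_0(\cdot)$ denotes the multiplicity of $0$ as an eigenvalue. *)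

theory Defs
  imports "Jordan_Normal_Form.DL_Rank" "Jordan_Normal_Form.Char_Poly"
begin

definition simple_graph :: "'a set \<Rightarrow> 'a set set \<Rightarrow> bool" where
  "simple_graph V E \<longleftrightarrow> finite V \<and>
     (\<forall>e\<in>E. \<exists>u v. u \<noteq> v \<and> u \<in> V \<and> v \<in> V \<and> e = {u, v})"

definition no_isolated :: "'a set \<Rightarrow> 'a set set \<Rightarrow> bool" where
  "no_isolated V E \<longleftrightarrow> (\<forall>v\<in>V. \<exists>e\<in>E. v \<in> e)"

definition ncomp :: "'a set \<Rightarrow> 'a set set \<Rightarrow> nat" where
  "ncomp V A = card (V // ({(u, v). {u, v} \<in> A}\<^sup>* \<inter> V \<times> V))"

definition grank :: "'a set \<Rightarrow> 'a set set \<Rightarrow> nat" where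
  "grank V A = card V - ncomp V A"

definition density :: "'a set \<Rightarrow> 'a set set \<Rightarrow> real" where
  "density V A = real (card A) / real (grank V A)"

definition uniformly_dense :: "'a set \<Rightarrow> 'a set set \<Rightarrow> bool" where
  "uniformly_dense V E \<longleftrightarrow>
     (\<forall>A. A \<subseteq> E \<and> A \<noteq> {} \<longrightarrow> density V A \<le> density V E)"

definition deg :: "'a set set \<Rightarrow> 'a \<Rightarrow> nat" where
  "deg A v = card {e \<in> A. v \<in> e}"

text \<open>An (arbitrary) enumeration of a finite set, used to index matrices.
  Ranks and characteristic polynomials do not depend on this choice.\<close>
definition enum_set :: "'a set \<Rightarrow> 'a list" where
  "enum_set S = (SOME xs. distinct xs \<and> set xs = S)"

definition norm_laplacian :: "'a set \<Rightarrow> 'a set set \<Rightarrow> real mat" where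
  "norm_laplacian W A = (let vs = enum_set W in
     mat (length vs) (length vs) (\<lambda>(i, j).
       (if i = j then 1 else 0)
       - (if {vs ! i, vs ! j} \<in> A then 1 / real (deg A (vs ! i)) else 0)))"

text \<open>Restriction G|A: vertex set = vertices incident to A, edge set A.\<close>
definition restr_vertices :: "'a set set \<Rightarrow> 'a set" where
  "restr_vertices A = \<Union>A"

definition mat_rank :: "real mat \<Rightarrow> nat" where
  "mat_rank M = vec_space.rank (dim_row M) M"

definition inc :: "('a set \<Rightarrow> 'a) \<Rightarrow> ('a set \<Rightarrow> 'a) \<Rightarrow> 'a \<Rightarrow> 'a set \<Rightarrow> real" where
  "inc src tgt v f = (if src f = v then 1 else 0) - (if tgt f = v then 1 else 0)"

definition edge_laplacian ::
  "('a set \<Rightarrow> 'a) \<Rightarrow> ('a set \<Rightarrow> 'a) \<Rightarrow> 'a set set \<Rightarrow> real mat" where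
  "edge_laplacian src tgt A = (let es = enum_set A in
     mat (length es) (length es) (\<lambda>(i, j).
       inc src tgt (src (es ! i)) (es ! j) / real (deg A (src (es ! i)))
     - inc src tgt (tgt (es ! i)) (es ! j) / real (deg A (tgt (es ! i)))))"

definition n0 :: "real mat \<Rightarrow> nat" where
  "n0 M = order 0 (char_poly M)"

end

theory Submission
  imports Defs "Jordan_Normal_Form.Jordan_Normal_Form_Uniqueness"
    "Jordan_Normal_Form.Jordan_Normal_Form_Existence"
begin

text \<open>Let \<open>B\<close> be the signed vertex-edge incidence matrix of the chosen orientation and \<open>D\<close>
  the diagonal degree matrix. Then \<open>L = D\<^sup>-\<^sup>1 B B\<^sup>T\<close> and \<open>L\<^sup>1 = B\<^sup>T D\<^sup>-\<^sup>1 B\<close>. As \<open>D\<close> is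
  positive definite, \<open>ker L = ker B\<^sup>T\<close> and \<open>ker L\<^sup>1 = ker B\<close>; as \<open>L\<^sup>1\<close> is symmetric, its
  eigenvalue 0 has multiplicity \<open>dim ker B\<close>. The kernel of \<open>B\<^sup>T\<close> consists of the functions that
  are constant on connected components, so \<open>rank B = |V| - c(E) = rank(E)\<close>. Applied to every
  \<open>G|A\<close> this gives \<open>rank L(G|A) = rank(A)\<close> and \<open>n\<^sub>0(L\<^sup>1(G|A)) = |A| - rank(A)\<close>, and both
  conditions (2) and (3) then rearrange to \<open>\<rho>(A) \<le> \<rho>(G)\<close>.\<close>

section \<open>Rank and kernel of matrices\<close>

lemma rank_plus_kernel_dim:
  fixes A :: "'a::field mat"
  assumes A: "A \<in> carrier_mat nr nc"
  shows "vec_space.rank nr A + kernel_dim A = nc"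
proof -
  interpret V: vec_space "TYPE('a)" nc .
  interpret W: vec_space "TYPE('a)" nr .
  interpret L: linear_map class_ring "module_vec TYPE('a) nc" "module_vec TYPE('a) nr"
    "\<lambda>v. A *\<^sub>v v"
    by (intro linear_map.intro vec_vs, unfold_locales)
      (use A in \<open>auto simp: LinearCombinations.module_hom_def module_vec_simps
        mult_add_distrib_mat_vec mult_mat_vec class_ring_simps\<close>)
  have im: "L.imT = W.span (set (cols A))"
    unfolding L.mod_hom.im_def W.col_space_def[symmetric] W.col_space_eq[OF A]
    using A by (auto simp: module_vec_simps)
  have ker: "L.kerT = mat_kernel A"
    unfolding L.mod_hom.ker_def mat_kernel_def using A by (auto simp: module_vec_simps)
  have "vectorspace.dim class_ring (W.vs L.imT) + vectorspace.dim class_ring (V.vs L.kerT) = V.dim"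
    by (rule L.rank_nullity) simp
  then show ?thesis
    unfolding im ker W.rank_def V.dim_is_n kernel_dim_def using A by simp
qed

lemma kernel_dim_eqI:
  fixes A B :: "'a::field mat"
  assumes "A \<in> carrier_mat nr nc" "B \<in> carrier_mat nr' nc" "mat_kernel A = mat_kernel B"
  shows "kernel_dim A = kernel_dim B"
  using assms unfolding kernel_dim_def by simp

lemma rank_mult_le_left:
  fixes A B :: "'a::field mat"
  assumes A: "A \<in> carrier_mat nr n" and B: "B \<in> carrier_mat n nc"
  shows "vec_space.rank nr (A * B) \<le> vec_space.rank nr A"
proof -
  interpret W: vec_space "TYPE('a)" nr .
  have AB: "A * B \<in> carrier_mat nr nc" using A B by simp
  have cols_AB: "set (cols (A * B)) \<subseteq> W.span (set (cols A))"
  proof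
    fix x assume "x \<in> set (cols (A * B))"
    then obtain j where j: "j < nc" "x = col (A * B) j" using AB by (auto simp: cols_def)
    then have "x = A *\<^sub>v col B j" using A B by auto
    with j(1) show "x \<in> W.span (set (cols A))"
      unfolding W.col_space_def[symmetric] W.col_space_eq[OF A] using A B by auto
  qed
  have sub_A: "VectorSpace.subspace class_ring (W.span (set (cols A))) W.V"
    using A by (intro W.span_is_subspace) (auto simp: cols_def)
  have sub_AB: "VectorSpace.subspace class_ring (W.span (set (cols (A * B)))) W.V"
    using A B AB by (intro W.span_is_subspace) (auto simp: cols_def)
  have "W.span (set (cols (A * B))) \<subseteq> W.span (set (cols A))"
    using cols_AB sub_A W.span_is_subset by (simp add: subspace_def)
  then have "VectorSpace.subspace class_ring (W.span (set (cols (A * B)))) (W.vs (W.span (set (cols A))))"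
    by (rule W.nested_subspaces[OF sub_A sub_AB])
  then show ?thesis unfolding W.rank_def
    using vectorspace.subspace_dim[OF W.subspace_is_vs[OF sub_A] _ W.fin_dim_span_cols[OF A]]
      W.fin_dim_span_cols[OF AB] by auto
qed

definition diag_of :: "nat \<Rightarrow> (nat \<Rightarrow> 'a::zero) \<Rightarrow> 'a mat" where
  "diag_of n p = mat n n (\<lambda>(i, j). if i = j then p i else 0)"

lemma diag_of_carrier [simp]:
  "diag_of n p \<in> carrier_mat n n" "dim_row (diag_of n p) = n" "dim_col (diag_of n p) = n"
  unfolding diag_of_def by simp_all

lemma diag_of_1: "diag_of n (\<lambda>_. 1) = 1\<^sub>m n"
  unfolding diag_of_def one_mat_def ..

lemma transpose_diag_of [simp]: "transpose_mat (diag_of n p) = diag_of n p"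
  unfolding diag_of_def by (rule eq_matI) auto

lemma diag_of_mult:
  fixes Y :: "'a::semiring_0 mat"
  assumes Y: "Y \<in> carrier_mat n nc"
  shows "diag_of n p * Y = mat n nc (\<lambda>(i, j). p i * Y $$ (i, j))"
proof (rule eq_matI)
  fix i j assume "i < dim_row (mat n nc (\<lambda>(i, j). p i * Y $$ (i, j)))"
    "j < dim_col (mat n nc (\<lambda>(i, j). p i * Y $$ (i, j)))"
  then have i: "i < n" and j: "j < nc" by auto
  have "(diag_of n p * Y) $$ (i, j) = (\<Sum>k<n. (if i = k then p i else 0) * Y $$ (k, j))"
    using i j Y by (auto simp: diag_of_def scalar_prod_def atLeast0LessThan intro!: sum.cong)
  also have "\<dots> = (\<Sum>k<n. if i = k then p i * Y $$ (k, j) else 0)"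
    by (rule sum.cong) auto
  finally have "(diag_of n p * Y) $$ (i, j) = p i * Y $$ (i, j)" using i by simp
  then show "(diag_of n p * Y) $$ (i, j) = mat n nc (\<lambda>(i, j). p i * Y $$ (i, j)) $$ (i, j)"
    using i j by simp
qed (use Y in auto)

lemma diag_of_mult_vec:
  fixes w :: "'a::semiring_0 vec"
  assumes "w \<in> carrier_vec n" "k < n"
  shows "(diag_of n p *\<^sub>v w) $ k = p k * w $ k"
proof -
  have "(diag_of n p *\<^sub>v w) $ k = (\<Sum>i<n. (if k = i then p k else 0) * w $ i)"
    using assms by (auto simp: diag_of_def scalar_prod_def atLeast0LessThan intro!: sum.cong)
  also have "\<dots> = (\<Sum>i<n. if k = i then p k * w $ i else 0)"
    by (rule sum.cong) auto
  finally show ?thesis using assms by simp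
qed

lemma diag_of_quadratic_form:
  fixes w :: "'a::comm_semiring_1 vec"
  assumes w: "w \<in> carrier_vec n"
  shows "(diag_of n p *\<^sub>v w) \<bullet> w = (\<Sum>k<n. p k * (w $ k)\<^sup>2)"
proof -
  have "(diag_of n p *\<^sub>v w) \<bullet> w = (\<Sum>k<n. (diag_of n p *\<^sub>v w) $ k * w $ k)"
    using w by (simp add: scalar_prod_def atLeast0LessThan)
  also have "\<dots> = (\<Sum>k<n. p k * (w $ k)\<^sup>2)"
    using w by (intro sum.cong)
      (simp_all add: diag_of_mult_vec power2_eq_square mult.assoc del: index_mult_mat_vec)
  finally show ?thesis .
qed

lemma weighted_gram_quadratic_form:
  fixes X :: "'a::comm_semiring_1 mat"
  assumes X: "X \<in> carrier_mat nr nc" and v: "v \<in> carrier_vec nc"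
  shows "((transpose_mat X * diag_of nr p * X) *\<^sub>v v) \<bullet> v = (\<Sum>k<nr. p k * ((X *\<^sub>v v) $ k)\<^sup>2)"
proof -
  let ?w = "X *\<^sub>v v"
  have w: "?w \<in> carrier_vec nr" using X v by simp
  have "(transpose_mat X * diag_of nr p * X) *\<^sub>v v = transpose_mat X *\<^sub>v (diag_of nr p *\<^sub>v ?w)"
    using X v assoc_mult_mat_vec[of "transpose_mat X * diag_of nr p" nc nr X nc v]
      assoc_mult_mat_vec[of "transpose_mat X" nc nr "diag_of nr p" nr ?w] by simp
  then have "((transpose_mat X * diag_of nr p * X) *\<^sub>v v) \<bullet> v
      = (transpose_mat X *\<^sub>v (diag_of nr p *\<^sub>v ?w)) \<bullet> v" by simp
  also have "\<dots> = (diag_of nr p *\<^sub>v ?w) \<bullet> ?w"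
    by (rule transpose_vec_mult_scalar[OF X v mult_mat_vec_carrier[OF diag_of_carrier(1) w]])
  also have "\<dots> = (\<Sum>k<nr. p k * (?w $ k)\<^sup>2)"
    by (rule diag_of_quadratic_form[OF w])
  finally show ?thesis .
qed

lemma mat_kernel_weighted_gram:
  fixes X :: "real mat"
  assumes X: "X \<in> carrier_mat nr nc" and pos: "\<And>k. k < nr \<Longrightarrow> p k > 0"
  shows "mat_kernel (transpose_mat X * diag_of nr p * X) = mat_kernel X"
proof
  have "transpose_mat X * diag_of nr p * X = (transpose_mat X * diag_of nr p) * X" ..
  then show "mat_kernel X \<subseteq> mat_kernel (transpose_mat X * diag_of nr p * X)"
    using mat_kernel_mult_subset[OF X, of "transpose_mat X * diag_of nr p" nc] X by simp
next
  have M: "transpose_mat X * diag_of nr p * X \<in> carrier_mat nc nc"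
    using X by (metis diag_of_carrier(1) mult_carrier_mat transpose_carrier_mat)
  show "mat_kernel (transpose_mat X * diag_of nr p * X) \<subseteq> mat_kernel X"
  proof
    fix v assume "v \<in> mat_kernel (transpose_mat X * diag_of nr p * X)"
    then have v: "v \<in> carrier_vec nc" and Mv: "(transpose_mat X * diag_of nr p * X) *\<^sub>v v = 0\<^sub>v nc"
      using mat_kernelD[OF M] by auto
    have "(\<Sum>k<nr. p k * ((X *\<^sub>v v) $ k)\<^sup>2) = 0"
      using weighted_gram_quadratic_form[OF X v, of p] Mv v by simp
    moreover have "\<forall>k\<in>{..<nr}. 0 \<le> p k * ((X *\<^sub>v v) $ k)\<^sup>2"
      using pos by (metis less_imp_le zero_le_power2 mult_nonneg_nonneg lessThan_iff)
    ultimately have "\<forall>k\<in>{..<nr}. p k * ((X *\<^sub>v v) $ k)\<^sup>2 = 0"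
      using sum_nonneg_eq_0_iff[of "{..<nr}" "\<lambda>k. p k * ((X *\<^sub>v v) $ k)\<^sup>2"] by simp
    then have "\<forall>k<nr. (X *\<^sub>v v) $ k = 0"
      using pos by (metis lessThan_iff mult_eq_0_iff power_eq_0_iff less_irrefl)
    then have "X *\<^sub>v v = 0\<^sub>v nr"
      using X by (auto intro!: eq_vecI simp del: index_mult_mat_vec)
    then show "v \<in> mat_kernel X" using X v by (intro mat_kernelI)
  qed
qed

lemma mat_kernel_gram:
  fixes X :: "real mat"
  assumes X: "X \<in> carrier_mat nr nc"
  shows "mat_kernel (transpose_mat X * X) = mat_kernel X"
  using mat_kernel_weighted_gram[OF X, of "\<lambda>_. 1"] X by (simp add: diag_of_1)

lemma rank_transpose_le:
  fixes X :: "real mat"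
  assumes X: "X \<in> carrier_mat nr nc"
  shows "vec_space.rank nc (transpose_mat X) \<le> vec_space.rank nr X"
proof -
  have XT: "transpose_mat X \<in> carrier_mat nc nr" and XXT: "X * transpose_mat X \<in> carrier_mat nr nr"
    using X by auto
  have "kernel_dim (X * transpose_mat X) = kernel_dim (transpose_mat X)"
    using mat_kernel_gram[OF XT] by (intro kernel_dim_eqI[OF XXT XT]) simp
  then have "vec_space.rank nr (X * transpose_mat X) = vec_space.rank nc (transpose_mat X)"
    using rank_plus_kernel_dim[OF XXT] rank_plus_kernel_dim[OF XT] by linarith
  then show ?thesis using rank_mult_le_left[OF X XT] by simp
qed

lemma rank_transpose:
  fixes X :: "real mat"
  assumes X: "X \<in> carrier_mat nr nc"
  shows "vec_space.rank nc (transpose_mat X) = vec_space.rank nr X"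
  using rank_transpose_le[OF X] rank_transpose_le[of "transpose_mat X" nc nr] X by simp

lemma kernel_dim_linear_bij:
  fixes X :: "'a::field mat" and T :: "'a vec \<Rightarrow> 'a vec"
  assumes X: "X \<in> carrier_mat nr n"
    and add: "\<And>f g. f \<in> carrier_vec n \<Longrightarrow> g \<in> carrier_vec n \<Longrightarrow> T (f + g) = T f + T g"
    and smult: "\<And>a f. f \<in> carrier_vec n \<Longrightarrow> T (a \<cdot>\<^sub>v f) = a \<cdot>\<^sub>v T f"
    and bij: "bij_betw T (mat_kernel X) (carrier_vec c)"
  shows "kernel_dim X = c"
proof -
  interpret K: kernel nr n X by unfold_locales (rule X)
  interpret C: vec_space "TYPE('a)" c .
  have ker_carrier: "f \<in> carrier_vec n" if "f \<in> mat_kernel X" for f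
    using that mat_kernel_carrier[OF X] by blast
  have T_carrier: "T f \<in> carrier_vec c" if "f \<in> mat_kernel X" for f
    using bij_betw_apply[OF bij that] .
  have lin: "linear_map class_ring K.VK (module_vec TYPE('a) c) T"
  proof (intro linear_map.intro mod_hom.intro vec_vs vec_module)
    show "vectorspace class_ring K.VK" "Module.module class_ring K.VK" by unfold_locales
    show "mod_hom_axioms class_ring K.VK (module_vec TYPE('a) c) T"
      unfolding mod_hom_axioms_def LinearCombinations.module_hom_def
      by (auto simp: module_vec_simps class_ring_simps ker_carrier T_carrier add smult)
  qed
  have "K.Ker.fin_dim"
    using kernel_basis_exists[OF X] unfolding K.Ker.fin_dim_def K.Ker.basis_def by blast
  then have "K.Ker.dim = C.dim"
    using linear_map.dim_eq[OF lin] bij unfolding bij_betw_def by (simp add: module_vec_simps)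
  then show ?thesis using C.dim_is_n by simp
qed

lemma kernel_dim_fibrewise_constant:
  fixes X :: "'a::field mat"
  assumes X: "X \<in> carrier_mat nr n"
    and ker: "mat_kernel X = {f \<in> carrier_vec n. \<forall>i<n. \<forall>k<n. cl i = cl k \<longrightarrow> f $ i = f $ k}"
    and onto: "cl ` {..<n} = {..<c}"
  shows "kernel_dim X = c"
proof -
  have "\<forall>j<c. \<exists>i<n. cl i = j"
  proof (intro allI impI)
    fix j assume "j < c"
    then have "j \<in> cl ` {..<n}" unfolding onto by simp
    then show "\<exists>i<n. cl i = j" by auto
  qed
  then obtain rep where rep: "\<And>j. j < c \<Longrightarrow> rep j < n" "\<And>j. j < c \<Longrightarrow> cl (rep j) = j"
    by metis
  have cl: "cl i < c" if "i < n" for i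
    using that unfolding lessThan_iff[symmetric] onto[symmetric] by simp
  define T where "T f = vec c (\<lambda>j. f $ rep j)" for f :: "'a vec"
  have ker_carrier: "f \<in> carrier_vec n" if "f \<in> mat_kernel X" for f
    using that mat_kernel_carrier[OF X] by blast
  have const: "f $ i = T f $ cl i" if f: "f \<in> mat_kernel X" and i: "i < n" for f i
  proof -
    from f have f_const: "\<forall>i<n. \<forall>k<n. cl i = cl k \<longrightarrow> f $ i = f $ k" unfolding ker by blast
    have "f $ i = f $ rep (cl i)"
      using f_const[rule_format, OF i, of "rep (cl i)"] rep[OF cl[OF i]] by simp
    then show ?thesis unfolding T_def using cl[OF i] by simp
  qed
  have "inj_on T (mat_kernel X)"
  proof (rule inj_onI)
    fix f g assume f: "f \<in> mat_kernel X" and g: "g \<in> mat_kernel X" and Tfg: "T f = T g"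
    show "f = g"
    proof (rule eq_vecI)
      fix i assume "i < dim_vec g"
      then have i: "i < n" using ker_carrier[OF g] by simp
      show "f $ i = g $ i" using const[OF f i] const[OF g i] Tfg by simp
    qed (use ker_carrier[OF f] ker_carrier[OF g] in simp)
  qed
  moreover have "T ` mat_kernel X = carrier_vec c"
  proof
    show "T ` mat_kernel X \<subseteq> carrier_vec c" unfolding T_def by auto
    show "carrier_vec c \<subseteq> T ` mat_kernel X"
    proof
      fix g :: "'a vec" assume g: "g \<in> carrier_vec c"
      have "vec n (\<lambda>i. g $ cl i) \<in> mat_kernel X" unfolding ker by auto
      moreover have "T (vec n (\<lambda>i. g $ cl i)) = g" using g rep unfolding T_def by (simp add: vec_eq_iff)
      ultimately show "g \<in> T ` mat_kernel X" by force
    qed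
  qed
  ultimately have "bij_betw T (mat_kernel X) (carrier_vec c)" by (rule bij_betw_imageI)
  then show ?thesis
    by (rule kernel_dim_linear_bij[OF X, rotated 2]) (auto simp: T_def rep(1) intro!: eq_vecI)
qed

section \<open>Symmetric real matrices\<close>

lemma symmetric_eigenvalue_real:
  fixes M :: "real mat"
  assumes M: "M \<in> carrier_mat n n" and sym: "transpose_mat M = M"
    and ev: "eigenvalue (map_mat complex_of_real M) a"
  shows "a \<in> \<real>"
proof -
  let ?M = "map_mat complex_of_real M"
  have Mc: "?M \<in> carrier_mat n n" using M by simp
  have symc: "transpose_mat ?M = ?M" using sym by (metis map_mat_transpose)
  obtain v where v: "v \<in> carrier_vec n" "v \<noteq> 0\<^sub>v n" "?M *\<^sub>v v = a \<cdot>\<^sub>v v"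
    using ev M unfolding eigenvalue_def eigenvector_def by auto
  define c where "c = conjugate v"
  have c: "c \<in> carrier_vec n" unfolding c_def using v by simp
  have "?M *\<^sub>v c = conjugate (?M *\<^sub>v v)"
  proof (rule eq_vecI)
    fix i assume "i < dim_vec (conjugate (?M *\<^sub>v v))"
    then have i: "i < n" using M by simp
    have "(?M *\<^sub>v c) $ i = cnj (\<Sum>j = 0..<n. complex_of_real (M $$ (i, j)) * v $ j)"
      using i M v unfolding c_def by (simp add: scalar_prod_def conjugate_complex_def cnj_sum)
    also have "\<dots> = conjugate (?M *\<^sub>v v) $ i"
      using i M v(1) by (simp add: scalar_prod_def conjugate_complex_def)
    finally show "(?M *\<^sub>v c) $ i = conjugate (?M *\<^sub>v v) $ i" .
  qed (use M in simp)
  also have "\<dots> = cnj a \<cdot>\<^sub>v c"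
    unfolding c_def v(3) using conjugate_smult_vec[of a v] by (simp add: conjugate_complex_def)
  finally have Mc_c: "?M *\<^sub>v c = cnj a \<cdot>\<^sub>v c" .
  \<comment> \<open>\<open>a \<langle>v, v\<rangle> = \<langle>M v, v\<rangle> = \<langle>v, M v\<rangle> = cnj a \<langle>v, v\<rangle>\<close> for the Hermitian form \<open>\<langle>x, y\<rangle> = x \<bullet> conjugate y\<close>\<close>
  have "a * (v \<bullet> c) = (transpose_mat ?M *\<^sub>v v) \<bullet> c"
    using v c symc by (simp add: smult_scalar_prod_distrib)
  also have "\<dots> = v \<bullet> (?M *\<^sub>v c)" by (rule transpose_vec_mult_scalar[OF Mc c v(1)])
  also have "\<dots> = cnj a * (v \<bullet> c)" using v c Mc_c by (simp add: scalar_prod_smult_distrib)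
  finally have "a * (v \<bullet> c) = cnj a * (v \<bullet> c)" .
  moreover have "v \<bullet> c \<noteq> 0"
    unfolding c_def using conjugate_square_greater_0_vec[OF v(1)] v(2) by auto
  ultimately have "cnj a = a" by simp
  then show ?thesis using Reals_cnj_iff by blast
qed

lemma symmetric_char_poly_splits:
  fixes M :: "real mat"
  assumes M: "M \<in> carrier_mat n n" and sym: "transpose_mat M = M"
  obtains es where "char_poly M = (\<Prod>a\<leftarrow>es. [:- a, 1:])"
proof -
  interpret map_poly_inj_comm_ring_hom complex_of_real
    by (intro map_poly_inj_comm_ring_hom.intro of_real_hom.inj_comm_ring_hom_axioms)
  let ?M = "map_mat complex_of_real M"
  have Mc: "?M \<in> carrier_mat n n" using M by simp
  obtain as where cp: "char_poly ?M = (\<Prod>a\<leftarrow>as. [:- a, 1:])"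
    using char_poly_factorized[OF Mc] by blast
  have "a \<in> \<real>" if a: "a \<in> set as" for a
  proof (rule symmetric_eigenvalue_real[OF M sym])
    have "poly (char_poly ?M) a = 0"
      unfolding cp poly_prod_list using a by (auto simp: prod_list_zero_iff)
    then show "eigenvalue ?M a" using eigenvalue_root_char_poly[OF Mc] by simp
  qed
  then have as: "as = map complex_of_real (map Re as)"
    by (induct as) (auto simp: complex_is_Real_iff)
  have "map_poly complex_of_real (char_poly M) = char_poly ?M"
    by (rule comm_ring_hom.char_poly_hom[OF of_real_hom.comm_ring_hom_axioms M, symmetric])
  also have "\<dots> = map_poly complex_of_real (\<Prod>a\<leftarrow>map Re as. [:- a, 1:])"
    unfolding cp by (subst as) (simp add: hom_prod_list o_def)
  finally show ?thesis using that[of "map Re as"] by (simp add: o_def)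
qed

lemma mat_kernel_pow_symmetric:
  fixes M :: "real mat"
  assumes M: "M \<in> carrier_mat n n" and sym: "transpose_mat M = M"
  shows "mat_kernel (M ^\<^sub>m Suc k) = mat_kernel M"
proof (induction k)
  case 0
  show ?case using M by simp
next
  case (Suc k)
  have Mk: "M ^\<^sub>m Suc k \<in> carrier_mat n n" by (rule pow_carrier_mat[OF M])
  have MM: "mat_kernel (M * M) = mat_kernel M" using mat_kernel_gram[OF M] sym by simp
  show ?case
  proof
    show "mat_kernel M \<subseteq> mat_kernel (M ^\<^sub>m Suc (Suc k))"
      using mat_kernel_mult_subset[OF M Mk] by simp
    show "mat_kernel (M ^\<^sub>m Suc (Suc k)) \<subseteq> mat_kernel M"
    proof
      fix v assume "v \<in> mat_kernel (M ^\<^sub>m Suc (Suc k))"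
      then have v: "v \<in> carrier_vec n" and "M ^\<^sub>m Suc k *\<^sub>v (M *\<^sub>v v) = 0\<^sub>v n"
        using mat_kernelD[of "M ^\<^sub>m Suc (Suc k)" n n v] M Mk by auto
      then have "M *\<^sub>v v \<in> mat_kernel M"
        using Suc.IH mat_kernelI[OF Mk] M by auto
      then have "(M * M) *\<^sub>v v = 0\<^sub>v n" using M v by (auto dest: mat_kernelD)
      then show "v \<in> mat_kernel M" using MM mat_kernelI[of "M * M" n n v] M v by auto
    qed
  qed
qed

text \<open>All eigenvalues of a real symmetric matrix are real, so it has a Jordan normal form, and
  its blocks for the eigenvalue 0 have size 1 because \<open>ker M\<^sup>2 = ker M\<close>.\<close>

lemma order_zero_char_poly_symmetric:
  fixes M :: "real mat"
  assumes M: "M \<in> carrier_mat n n" and sym: "transpose_mat M = M"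
  shows "order 0 (char_poly M) = kernel_dim M"
proof -
  obtain es where "char_poly M = (\<Prod>a\<leftarrow>es. [:- a, 1:])"
    using symmetric_char_poly_splits[OF M sym] .
  then obtain n_as where jnf: "jordan_nf M n_as" using jordan_nf_exists[OF M] by blast
  have "order 0 (char_poly M) \<le> n"
    using order_degree[of "char_poly M" 0] degree_monic_char_poly[OF M] by fastforce
  then have small: "m \<le> n" if "(m, 0) \<in> set n_as" for m
    using jordan_nf_block_size_order_bound[OF jnf that] by simp
  have "order 0 (char_poly M) = sum_list (map fst (filter (\<lambda>(m, e). e = 0) n_as))"
    using jordan_nf_order[OF jnf] by (metis (mono_tags, lifting) case_prod_beta filter_cong)
  also have "\<dots> = sum_list (map (min (Suc n)) (map fst (filter (\<lambda>(m, e). e = 0) n_as)))"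
    using small by (intro arg_cong[of _ _ sum_list] map_idI[symmetric]) force
  also have "\<dots> = dim_gen_eigenspace M 0 (Suc n)"
    by (rule dim_gen_eigenspace[OF jnf, symmetric])
  also have "\<dots> = kernel_dim (M ^\<^sub>m Suc n)"
  proof -
    have "char_matrix M 0 = M" using M by (auto simp: char_matrix_def)
    then show ?thesis by (simp add: dim_gen_eigenspace_def)
  qed
  also have "\<dots> = kernel_dim M"
    by (rule kernel_dim_eqI[OF pow_carrier_mat[OF M] M mat_kernel_pow_symmetric[OF M sym]])
  finally show ?thesis .
qed

lemma enum_set:
  assumes "finite S"
  shows "distinct (enum_set S)" "set (enum_set S) = S" "length (enum_set S) = card S"
proof -
  have "\<exists>xs. distinct xs \<and> set xs = S" using finite_distinct_list[OF assms] by blast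
  then have "distinct (enum_set S) \<and> set (enum_set S) = S"
    unfolding enum_set_def by (rule someI_ex)
  then show "distinct (enum_set S)" "set (enum_set S) = S" "length (enum_set S) = card S"
    using distinct_card by fastforce+
qed

lemma sum_nth_distinct:
  assumes "distinct xs"
  shows "(\<Sum>i<length xs. g (xs ! i)) = (\<Sum>x\<in>set xs. g x)"
  using sum_list_distinct_conv_sum_set[OF assms, of g] sum_list_sum_nth[of "map g xs"]
  by (simp add: atLeast0LessThan)

lemma find_index_nth:
  assumes "distinct xs" "j < length xs"
  shows "find_index xs (xs ! j) = j"
proof -
  have "find_index xs (xs ! j) < length xs" "xs ! find_index xs (xs ! j) = xs ! j"
    using assms(2) find_index_leq_length find_index_in_set nth_mem by metis+
  then show ?thesis using assms nth_eq_iff_index_eq by metis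
qed

section \<open>Connected components\<close>

abbreviation reach :: "'a set set \<Rightarrow> 'a rel" where
  "reach A \<equiv> {(u, v). {u, v} \<in> A}\<^sup>*"

lemma equiv_reach: "equiv V (reach A \<inter> V \<times> V)"
proof (rule equivI)
  have "sym {(u, v). {u, v} \<in> A}" unfolding sym_def by (auto simp: insert_commute)
  then have "sym (reach A)" by (rule sym_rtrancl)
  then show "sym (reach A \<inter> V \<times> V)" unfolding sym_def by blast
  show "trans (reach A \<inter> V \<times> V)" by (rule transI) (auto intro: rtrancl_trans)
qed (auto simp: refl_on_def)

lemma reach_in_Union: "(x, y) \<in> reach A \<Longrightarrow> x = y \<or> (x \<in> \<Union>A \<and> y \<in> \<Union>A)"
  by (induct rule: rtrancl_induct) auto

lemma ncomp_superset:
  assumes V: "finite V" and U: "\<Union>A \<subseteq> V"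
  shows "ncomp V A = ncomp (\<Union>A) A + card (V - \<Union>A)"
proof -
  define RV where "RV = reach A \<inter> V \<times> V"
  define RU where "RU = reach A \<inter> \<Union>A \<times> \<Union>A"
  have "RV `` {x} = RU `` {x}" if "x \<in> \<Union>A" for x
    using that U reach_in_Union[of x _ A] unfolding RV_def RU_def by blast
  then have comps_U: "(\<lambda>x. RV `` {x}) ` \<Union>A = \<Union>A // RU" unfolding quotient_def by auto
  have "RV `` {x} = {x}" if "x \<in> V - \<Union>A" for x
    using that reach_in_Union[of x _ A] unfolding RV_def by blast
  then have comps_rest: "(\<lambda>x. RV `` {x}) ` (V - \<Union>A) = (\<lambda>x. {x}) ` (V - \<Union>A)" by auto
  have "V // RV = (\<lambda>x. RV `` {x}) ` \<Union>A \<union> (\<lambda>x. RV `` {x}) ` (V - \<Union>A)"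
    unfolding quotient_def using U by blast
  then have split: "V // RV = \<Union>A // RU \<union> (\<lambda>x. {x}) ` (V - \<Union>A)"
    unfolding comps_U comps_rest .
  have "X \<subseteq> \<Union>A" if "X \<in> \<Union>A // RU" for X
    using that unfolding quotient_def RU_def by auto
  then have disjoint: "\<Union>A // RU \<inter> (\<lambda>x. {x}) ` (V - \<Union>A) = {}" by auto
  have "finite (\<Union>A // RU)"
    using U V finite_subset by (intro finite_quotient) (auto simp: RU_def)
  then have "card (V // RV) = card (\<Union>A // RU) + card ((\<lambda>x. {x}) ` (V - \<Union>A))"
    unfolding split using V disjoint by (intro card_Un_disjoint) auto
  also have "card ((\<lambda>x. {x}) ` (V - \<Union>A)) = card (V - \<Union>A)"
    by (rule card_image) (auto simp: inj_on_def)
  finally show ?thesis unfolding ncomp_def RV_def RU_def .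
qed

lemma grank_superset:
  assumes V: "finite V" and U: "\<Union>A \<subseteq> V"
  shows "grank V A = grank (\<Union>A) A"
proof -
  have "card V = card (\<Union>A) + card (V - \<Union>A)"
    using V U by (metis card_Diff_subset card_mono finite_subset le_add_diff_inverse)
  then show ?thesis unfolding grank_def using ncomp_superset[OF V U] by simp
qed

lemma ncomp_less_card:
  assumes W: "finite W" and uv: "u \<in> W" "v \<in> W" "u \<noteq> v" "{u, v} \<in> A"
  shows "ncomp W A < card W"
proof -
  define R where "R = reach A \<inter> W \<times> W"
  have "(u, v) \<in> R" unfolding R_def using uv by auto
  then have "R `` {u} = R `` {v}" unfolding R_def by (rule equiv_class_eq[OF equiv_reach])
  then have "\<not> inj_on (\<lambda>x. R `` {x}) W" using uv unfolding inj_on_def by blast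
  then have "card ((\<lambda>x. R `` {x}) ` W) < card W"
    using card_image_le[OF W, of "\<lambda>x. R `` {x}"] inj_on_iff_eq_card[OF W, of "\<lambda>x. R `` {x}"]
    by linarith
  moreover have "W // R = (\<lambda>x. R `` {x}) ` W" unfolding quotient_def by blast
  ultimately show ?thesis unfolding ncomp_def R_def[symmetric] by simp
qed

section \<open>The incidence matrix of an oriented graph\<close>

locale oriented_graph =
  fixes A :: "'a set set" and src tgt :: "'a set \<Rightarrow> 'a"
  assumes finite_edges: "finite A"
    and edge_ends: "\<And>e. e \<in> A \<Longrightarrow> e = {src e, tgt e}"
    and src_neq_tgt: "\<And>e. e \<in> A \<Longrightarrow> src e \<noteq> tgt e"
begin

abbreviation "W \<equiv> \<Union>A"

definition "vs = enum_set W"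
definition "es = enum_set A"
definition "idx u = find_index vs u"

definition incidence :: "real mat" where
  "incidence = mat (card W) (card A) (\<lambda>(i, j). inc src tgt (vs ! i) (es ! j))"

definition inv_degree :: "real mat" where
  "inv_degree = diag_of (card W) (\<lambda>i. 1 / real (deg A (vs ! i)))"

lemma finite_W: "finite W"
  using finite_edges edge_ends by (metis finite.emptyI finite.insertI finite_Union)

lemma vs: "distinct vs" "set vs = W" "length vs = card W"
  unfolding vs_def using enum_set[OF finite_W] by auto

lemma es: "distinct es" "set es = A" "length es = card A"
  unfolding es_def using enum_set[OF finite_edges] by auto

lemma nth_vs: "i < card W \<Longrightarrow> vs ! i \<in> W"
  using vs by (metis nth_mem)

lemma nth_es: "j < card A \<Longrightarrow> es ! j \<in> A"
  using es by (metis nth_mem)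

lemma idx: "u \<in> W \<Longrightarrow> idx u < card W \<and> vs ! idx u = u"
  unfolding idx_def using find_index_leq_length find_index_in_set vs by metis

lemma idx_nth: "i < card W \<Longrightarrow> idx (vs ! i) = i"
  using idx[OF nth_vs] vs(1,3) by (metis nth_eq_iff_index_eq)

lemma ends_in_W: "e \<in> A \<Longrightarrow> src e \<in> W \<and> tgt e \<in> W"
  using edge_ends by blast

lemma deg_nth_vs_pos: "i < card W \<Longrightarrow> deg A (vs ! i) > 0"
  using nth_vs finite_edges unfolding deg_def by (auto simp: card_gt_0_iff)

lemma singleton_notin_edges: "{u} \<notin> A"
  using edge_ends src_neq_tgt by (metis insert_absorb insert_iff singletonD)

lemma incidence_carrier: "incidence \<in> carrier_mat (card W) (card A)"
  unfolding incidence_def by simp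

lemma inv_degree_carrier: "inv_degree \<in> carrier_mat (card W) (card W)"
  unfolding inv_degree_def by simp

lemma incidence_column_sum:
  assumes e: "e \<in> A"
  shows "(\<Sum>k<card W. inc src tgt (vs ! k) e * h (vs ! k)) = h (src e) - h (tgt e)"
proof -
  have "(\<Sum>k<card W. inc src tgt (vs ! k) e * h (vs ! k)) = (\<Sum>u\<in>W. inc src tgt u e * h u)"
    using sum_nth_distinct[OF vs(1), of "\<lambda>u. inc src tgt u e * h u"] vs by simp
  also have "\<dots> = (\<Sum>u\<in>{src e, tgt e}. inc src tgt u e * h u)"
    using finite_W ends_in_W[OF e] by (intro sum.mono_neutral_right) (auto simp: inc_def)
  also have "\<dots> = h (src e) - h (tgt e)"
    using src_neq_tgt[OF e] by (simp add: inc_def)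
  finally show ?thesis .
qed

lemma inc_mult_inc:
  assumes e: "e \<in> A"
  shows "inc src tgt u e * inc src tgt w e =
    (if u = w then (if u \<in> e then 1 else 0) else if e = {u, w} then -1 else 0)"
proof -
  have "e = {src e, tgt e}" "src e \<noteq> tgt e" using edge_ends[OF e] src_neq_tgt[OF e] by auto
  then show ?thesis unfolding inc_def
    by (cases "u = src e"; cases "u = tgt e"; cases "w = src e"; cases "w = tgt e")
      (auto simp: doubleton_eq_iff)
qed

lemma incidence_mult_transpose:
  "incidence * transpose_mat incidence = mat (card W) (card W) (\<lambda>(i, j).
     if i = j then real (deg A (vs ! i)) else if {vs ! i, vs ! j} \<in> A then -1 else 0)"
proof (rule eq_matI)
  fix i j assume "i < dim_row (mat (card W) (card W) (\<lambda>(i, j).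
     if i = j then real (deg A (vs ! i)) else if {vs ! i, vs ! j} \<in> A then -1 else 0))"
    "j < dim_col (mat (card W) (card W) (\<lambda>(i, j).
     if i = j then real (deg A (vs ! i)) else if {vs ! i, vs ! j} \<in> A then -1 else 0))"
  then have i: "i < card W" and j: "j < card W" by auto
  let ?u = "vs ! i" and ?w = "vs ! j"
  have "(incidence * transpose_mat incidence) $$ (i, j)
      = (\<Sum>l<card A. inc src tgt ?u (es ! l) * inc src tgt ?w (es ! l))"
    using i j unfolding incidence_def by (simp add: scalar_prod_def atLeast0LessThan)
  also have "\<dots> = (\<Sum>e\<in>A. inc src tgt ?u e * inc src tgt ?w e)"
    using sum_nth_distinct[OF es(1), of "\<lambda>e. inc src tgt ?u e * inc src tgt ?w e"] es by simp
  also have "\<dots> = (\<Sum>e\<in>A. if ?u = ?w then (if ?u \<in> e then 1 else 0) else if e = {?u, ?w} then -1 else 0)"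
    by (rule sum.cong) (simp_all add: inc_mult_inc)
  also have "\<dots> = (if i = j then real (deg A ?u) else if {?u, ?w} \<in> A then -1 else 0)"
  proof (cases "i = j")
    case True
    then show ?thesis using finite_edges by (simp add: deg_def sum.If_cases Int_def)
  next
    case False
    then have "?u \<noteq> ?w" using vs i j by (simp add: nth_eq_iff_index_eq)
    then show ?thesis using False finite_edges by (simp add: sum.delta')
  qed
  finally show "(incidence * transpose_mat incidence) $$ (i, j) = mat (card W) (card W) (\<lambda>(i, j).
     if i = j then real (deg A (vs ! i)) else if {vs ! i, vs ! j} \<in> A then -1 else 0) $$ (i, j)"
    using i j by simp
qed (simp_all add: incidence_def)

lemma norm_laplacian_factorization:
  "norm_laplacian W A = inv_degree * (incidence * transpose_mat incidence)"
proof -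
  have "inv_degree * (incidence * transpose_mat incidence) = mat (card W) (card W) (\<lambda>(i, j).
      1 / real (deg A (vs ! i)) * (incidence * transpose_mat incidence) $$ (i, j))"
    unfolding inv_degree_def using incidence_carrier by (intro diag_of_mult) simp
  also have "\<dots> = norm_laplacian W A"
  proof (rule eq_matI)
    fix i j assume "i < dim_row (norm_laplacian W A)" "j < dim_col (norm_laplacian W A)"
    then have i: "i < card W" and j: "j < card W"
      unfolding norm_laplacian_def Let_def vs_def[symmetric] using vs by auto
    have "deg A (vs ! i) > 0" using deg_nth_vs_pos i by blast
    then show "mat (card W) (card W) (\<lambda>(i, j). 1 / real (deg A (vs ! i))
        * (incidence * transpose_mat incidence) $$ (i, j)) $$ (i, j) = norm_laplacian W A $$ (i, j)"
      unfolding norm_laplacian_def Let_def vs_def[symmetric] incidence_mult_transpose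
      using i j vs(3) singleton_notin_edges by auto
  qed (simp_all add: norm_laplacian_def Let_def vs_def[symmetric] vs)
  finally show ?thesis by simp
qed

lemma edge_laplacian_factorization:
  "edge_laplacian src tgt A = transpose_mat incidence * inv_degree * incidence"
proof (rule eq_matI)
  have DB: "inv_degree * incidence = mat (card W) (card A) (\<lambda>(k, j).
      1 / real (deg A (vs ! k)) * incidence $$ (k, j))"
    unfolding inv_degree_def using incidence_carrier by (intro diag_of_mult) simp
  have assoc: "transpose_mat incidence * inv_degree * incidence
      = transpose_mat incidence * (inv_degree * incidence)"
    using incidence_carrier inv_degree_carrier by (intro assoc_mult_mat) auto
  fix i j assume "i < dim_row (transpose_mat incidence * inv_degree * incidence)"
    "j < dim_col (transpose_mat incidence * inv_degree * incidence)"
  then have i: "i < card A" and j: "j < card A" by (simp_all add: incidence_def)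
  have "(transpose_mat incidence * inv_degree * incidence) $$ (i, j)
      = (\<Sum>k<card W. inc src tgt (vs ! k) (es ! i) *
          (inc src tgt (vs ! k) (es ! j) / real (deg A (vs ! k))))"
    unfolding assoc DB using i j by (simp add: incidence_def scalar_prod_def atLeast0LessThan)
  also have "\<dots> = inc src tgt (src (es ! i)) (es ! j) / real (deg A (src (es ! i)))
      - inc src tgt (tgt (es ! i)) (es ! j) / real (deg A (tgt (es ! i)))"
    by (rule incidence_column_sum[OF nth_es[OF i]])
  finally show "edge_laplacian src tgt A $$ (i, j)
      = (transpose_mat incidence * inv_degree * incidence) $$ (i, j)"
    unfolding edge_laplacian_def Let_def es_def[symmetric] using i j es by simp
qed (simp_all add: edge_laplacian_def Let_def es_def[symmetric] es incidence_def)

lemma edge_laplacian_symmetric: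
  "transpose_mat (edge_laplacian src tgt A) = edge_laplacian src tgt A"
proof -
  let ?B = incidence and ?D = inv_degree
  have "transpose_mat (transpose_mat ?B * ?D * ?B) = transpose_mat ?B * transpose_mat (transpose_mat ?B * ?D)"
    using incidence_carrier inv_degree_carrier by (intro transpose_mult) auto
  also have "\<dots> = transpose_mat ?B * (?D * ?B)"
    using incidence_carrier inv_degree_carrier by (subst transpose_mult) (auto simp: inv_degree_def)
  also have "\<dots> = transpose_mat ?B * ?D * ?B"
    using incidence_carrier inv_degree_carrier by (intro assoc_mult_mat[symmetric]) auto
  finally show ?thesis unfolding edge_laplacian_factorization .
qed

lemma mat_kernel_edge_laplacian: "mat_kernel (edge_laplacian src tgt A) = mat_kernel incidence"
  unfolding edge_laplacian_factorization inv_degree_def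
  using incidence_carrier deg_nth_vs_pos by (intro mat_kernel_weighted_gram) auto

lemma n0_edge_laplacian_plus_rank_incidence:
  "n0 (edge_laplacian src tgt A) + vec_space.rank (card W) incidence = card A"
proof -
  have L: "edge_laplacian src tgt A \<in> carrier_mat (card A) (card A)"
    unfolding edge_laplacian_def Let_def es_def[symmetric] using es by simp
  have "n0 (edge_laplacian src tgt A) = kernel_dim (edge_laplacian src tgt A)"
    unfolding n0_def by (rule order_zero_char_poly_symmetric[OF L edge_laplacian_symmetric])
  also have "\<dots> = kernel_dim incidence"
    by (rule kernel_dim_eqI[OF L incidence_carrier mat_kernel_edge_laplacian])
  finally show ?thesis using rank_plus_kernel_dim[OF incidence_carrier] by simp
qed

lemma rank_norm_laplacian_eq_rank_incidence:
  "mat_rank (norm_laplacian W A) = vec_space.rank (card W) incidence"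
proof -
  let ?B = incidence
  have BT: "transpose_mat ?B \<in> carrier_mat (card A) (card W)"
    and BBT: "?B * transpose_mat ?B \<in> carrier_mat (card W) (card W)"
    using incidence_carrier by auto
  have L: "norm_laplacian W A \<in> carrier_mat (card W) (card W)"
    unfolding norm_laplacian_factorization using BBT inv_degree_carrier by simp
  have "diag_of (card W) (\<lambda>i. real (deg A (vs ! i))) * inv_degree = 1\<^sub>m (card W)"
    unfolding inv_degree_def
    by (subst diag_of_mult) (auto intro!: eq_matI simp: diag_of_def dest!: deg_nth_vs_pos)
  then have "mat_kernel (norm_laplacian W A) = mat_kernel (?B * transpose_mat ?B)"
    unfolding norm_laplacian_factorization
    by (intro mat_kernel_mult_eq[OF BBT inv_degree_carrier diag_of_carrier(1)])
  also have "\<dots> = mat_kernel (transpose_mat ?B)"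
    using mat_kernel_gram[OF BT] by simp
  finally have "kernel_dim (norm_laplacian W A) = kernel_dim (transpose_mat ?B)"
    by (rule kernel_dim_eqI[OF L BT])
  then show ?thesis
    using rank_plus_kernel_dim[OF L] rank_plus_kernel_dim[OF BT] rank_transpose[OF incidence_carrier] L
    unfolding mat_rank_def by simp
qed

lemma transpose_incidence_mult_vec:
  assumes f: "f \<in> carrier_vec (card W)" and j: "j < card A"
  shows "(transpose_mat incidence *\<^sub>v f) $ j = f $ idx (src (es ! j)) - f $ idx (tgt (es ! j))"
proof -
  have "(transpose_mat incidence *\<^sub>v f) $ j
      = (\<Sum>k<card W. inc src tgt (vs ! k) (es ! j) * f $ idx (vs ! k))"
    using f j by (simp add: incidence_def scalar_prod_def atLeast0LessThan idx_nth)
  also have "\<dots> = f $ idx (src (es ! j)) - f $ idx (tgt (es ! j))"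
    by (rule incidence_column_sum[OF nth_es[OF j]])
  finally show ?thesis .
qed

lemma mat_kernel_transpose_incidence:
  "mat_kernel (transpose_mat incidence)
    = {f \<in> carrier_vec (card W). \<forall>e\<in>A. f $ idx (src e) = f $ idx (tgt e)}"
proof -
  have BT: "transpose_mat incidence \<in> carrier_mat (card A) (card W)"
    using incidence_carrier by simp
  have "transpose_mat incidence *\<^sub>v f = 0\<^sub>v (card A) \<longleftrightarrow> (\<forall>e\<in>A. f $ idx (src e) = f $ idx (tgt e))"
    if f: "f \<in> carrier_vec (card W)" for f
  proof -
    have "transpose_mat incidence *\<^sub>v f = 0\<^sub>v (card A)
        \<longleftrightarrow> (\<forall>j<card A. f $ idx (src (es ! j)) = f $ idx (tgt (es ! j)))"
      using BT by (simp add: vec_eq_iff transpose_incidence_mult_vec[OF f] del: index_mult_mat_vec)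
    also have "\<dots> \<longleftrightarrow> (\<forall>e\<in>A. f $ idx (src e) = f $ idx (tgt e))"
      using es by (metis in_set_conv_nth)
    finally show ?thesis .
  qed
  then show ?thesis unfolding mat_kernel[OF BT] by auto
qed

lemma reach_constant:
  assumes g: "\<forall>e\<in>A. g (src e) = g (tgt e)" and uv: "(u, v) \<in> reach A"
  shows "g u = g v"
  using uv
proof (induction rule: rtrancl_induct)
  case (step y z)
  then have "{y, z} \<in> A" by simp
  then have "g y = g z" using g edge_ends by (metis doubleton_eq_iff)
  then show ?case using step.IH by simp
qed simp

definition "components = enum_set (W // (reach A \<inter> W \<times> W))"
definition "component i = find_index components ((reach A \<inter> W \<times> W) `` {vs ! i})"

lemma components:
  "distinct components" "set components = W // (reach A \<inter> W \<times> W)"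
  "length components = ncomp W A"
proof -
  have "finite (W // (reach A \<inter> W \<times> W))"
    using finite_W by (intro finite_quotient) auto
  then show "distinct components" "set components = W // (reach A \<inter> W \<times> W)"
    "length components = ncomp W A"
    unfolding components_def ncomp_def using enum_set by auto
qed

lemma component_class:
  assumes i: "i < card W"
  shows "component i < ncomp W A" "components ! component i = (reach A \<inter> W \<times> W) `` {vs ! i}"
proof -
  have "(reach A \<inter> W \<times> W) `` {vs ! i} \<in> set components"
    unfolding components(2) using nth_vs[OF i] by (rule quotientI)
  then show "component i < ncomp W A" "components ! component i = (reach A \<inter> W \<times> W) `` {vs ! i}"
    unfolding component_def using find_index_leq_length find_index_in_set components(3) by metis+
qed

lemma component_eq_iff:
  assumes i: "i < card W" and k: "k < card W"
  shows "component i = component k \<longleftrightarrow> (vs ! i, vs ! k) \<in> reach A"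
proof -
  have "component i = component k \<longleftrightarrow> (reach A \<inter> W \<times> W) `` {vs ! i} = (reach A \<inter> W \<times> W) `` {vs ! k}"
    using component_class[OF i] component_class[OF k] by (metis component_def)
  also have "\<dots> \<longleftrightarrow> (vs ! i, vs ! k) \<in> reach A \<inter> W \<times> W"
    using nth_vs[OF i] nth_vs[OF k] by (rule eq_equiv_class_iff[OF equiv_reach])
  finally show ?thesis using nth_vs[OF i] nth_vs[OF k] by blast
qed

lemma component_onto: "component ` {..<card W} = {..<ncomp W A}"
proof
  show "component ` {..<card W} \<subseteq> {..<ncomp W A}" using component_class by auto
  show "{..<ncomp W A} \<subseteq> component ` {..<card W}"
  proof
    fix j assume "j \<in> {..<ncomp W A}"
    then have j: "j < length components" using components by simp
    then have "components ! j \<in> W // (reach A \<inter> W \<times> W)" using components nth_mem by metis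
    then obtain u where u: "u \<in> W" "components ! j = (reach A \<inter> W \<times> W) `` {u}"
      by (rule quotientE)
    then have "component (idx u) = find_index components (components ! j)"
      unfolding component_def using idx[OF u(1)] by simp
    also have "\<dots> = j" using components(1) j by (rule find_index_nth)
    finally show "j \<in> component ` {..<card W}" using idx[OF u(1)] by force
  qed
qed

lemma edge_constant_iff_component_constant:
  assumes f: "f \<in> carrier_vec (card W)"
  shows "(\<forall>e\<in>A. f $ idx (src e) = f $ idx (tgt e))
    \<longleftrightarrow> (\<forall>i<card W. \<forall>k<card W. component i = component k \<longrightarrow> f $ i = f $ k)"
proof
  assume const: "\<forall>e\<in>A. f $ idx (src e) = f $ idx (tgt e)"
  show "\<forall>i<card W. \<forall>k<card W. component i = component k \<longrightarrow> f $ i = f $ k"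
  proof (intro allI impI)
    fix i k assume i: "i < card W" and k: "k < card W" and "component i = component k"
    then have "(vs ! i, vs ! k) \<in> reach A" using component_eq_iff by blast
    then have "f $ idx (vs ! i) = f $ idx (vs ! k)"
      by (rule reach_constant[where g = "\<lambda>u. f $ idx u", OF const])
    then show "f $ i = f $ k" using i k by (simp add: idx_nth)
  qed
next
  assume const: "\<forall>i<card W. \<forall>k<card W. component i = component k \<longrightarrow> f $ i = f $ k"
  show "\<forall>e\<in>A. f $ idx (src e) = f $ idx (tgt e)"
  proof
    fix e assume e: "e \<in> A"
    then have "(src e, tgt e) \<in> reach A" using edge_ends by force
    then have "component (idx (src e)) = component (idx (tgt e))"
      using idx ends_in_W[OF e] component_eq_iff by metis
    then show "f $ idx (src e) = f $ idx (tgt e)" using const idx ends_in_W[OF e] by blast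
  qed
qed

lemma kernel_dim_transpose_incidence: "kernel_dim (transpose_mat incidence) = ncomp W A"
proof (rule kernel_dim_fibrewise_constant[OF _ _ component_onto])
  show "transpose_mat incidence \<in> carrier_mat (card A) (card W)" using incidence_carrier by simp
  show "mat_kernel (transpose_mat incidence)
      = {f \<in> carrier_vec (card W). \<forall>i<card W. \<forall>k<card W. component i = component k \<longrightarrow> f $ i = f $ k}"
    unfolding mat_kernel_transpose_incidence using edge_constant_iff_component_constant by blast
qed

lemma rank_incidence: "vec_space.rank (card W) incidence = grank W A"
  using rank_plus_kernel_dim[of "transpose_mat incidence" "card A" "card W"] incidence_carrier
    rank_transpose[OF incidence_carrier] kernel_dim_transpose_incidence
  unfolding grank_def by simp

lemma rank_norm_laplacian: "mat_rank (norm_laplacian W A) = grank W A"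
  using rank_norm_laplacian_eq_rank_incidence rank_incidence by simp

lemma n0_edge_laplacian: "n0 (edge_laplacian src tgt A) + grank W A = card A"
  using n0_edge_laplacian_plus_rank_incidence rank_incidence by simp

end

section \<open>Simple graphs\<close>

lemma simple_graph_finite_vertices: "simple_graph V E \<Longrightarrow> finite V"
  unfolding simple_graph_def by blast

lemma simple_graph_edge: "simple_graph V E \<Longrightarrow> e \<in> E \<Longrightarrow> \<exists>u v. u \<noteq> v \<and> e = {u, v}"
  unfolding simple_graph_def by blast

lemma simple_graph_Union_subset: "simple_graph V E \<Longrightarrow> A \<subseteq> E \<Longrightarrow> \<Union>A \<subseteq> V"
  unfolding simple_graph_def by fastforce

lemma simple_graph_finite_edges:
  assumes "simple_graph V E"
  shows "finite E"
proof (rule finite_UnionD)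
  show "finite (\<Union>E)"
    using simple_graph_Union_subset[OF assms order_refl] simple_graph_finite_vertices[OF assms]
    by (rule finite_subset)
qed

lemma simple_graph_oriented_subgraph:
  assumes G: "simple_graph V E" and orient: "\<forall>e\<in>E. e = {src e, tgt e}" and A: "A \<subseteq> E"
  shows "oriented_graph A src tgt"
proof
  show "finite A" using simple_graph_finite_edges[OF G] A finite_subset by blast
  fix e assume e: "e \<in> A"
  then show e_ends: "e = {src e, tgt e}" using orient A by blast
  obtain u v where uv: "u \<noteq> v" "e = {u, v}" using simple_graph_edge[OF G] A e by blast
  show "src e \<noteq> tgt e"
  proof
    assume "src e = tgt e"
    then have "e = {src e}" using e_ends by simp
    then have "u = src e" "v = src e" using uv(2) by blast+
    then show False using uv(1) by simp
  qed
qed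

lemma simple_graph_grank_subgraph:
  "simple_graph V E \<Longrightarrow> A \<subseteq> E \<Longrightarrow> grank V A = grank (restr_vertices A) A"
  unfolding restr_vertices_def
  by (intro grank_superset simple_graph_finite_vertices simple_graph_Union_subset)

lemma simple_graph_rank_norm_laplacian:
  assumes G: "simple_graph V E" and orient: "\<forall>e\<in>E. e = {src e, tgt e}" and A: "A \<subseteq> E"
  shows "mat_rank (norm_laplacian (restr_vertices A) A) = grank V A"
  using oriented_graph.rank_norm_laplacian[OF simple_graph_oriented_subgraph[OF G orient A]]
    simple_graph_grank_subgraph[OF G A] unfolding restr_vertices_def by simp

lemma simple_graph_n0_edge_laplacian:
  assumes G: "simple_graph V E" and orient: "\<forall>e\<in>E. e = {src e, tgt e}" and A: "A \<subseteq> E"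
  shows "n0 (edge_laplacian src tgt A) + grank V A = card A"
  using oriented_graph.n0_edge_laplacian[OF simple_graph_oriented_subgraph[OF G orient A]]
    simple_graph_grank_subgraph[OF G A] unfolding restr_vertices_def by simp

lemma simple_graph_grank_pos:
  assumes G: "simple_graph V E" and A: "A \<subseteq> E" "A \<noteq> {}"
  shows "grank V A > 0"
proof -
  obtain u v where uv: "u \<noteq> v" "{u, v} \<in> A" using simple_graph_edge[OF G] A by blast
  have "finite (\<Union>A)"
    using simple_graph_finite_vertices[OF G] simple_graph_Union_subset[OF G A(1)] finite_subset by blast
  then have "ncomp (\<Union>A) A < card (\<Union>A)" using uv by (intro ncomp_less_card) auto
  then have "grank (\<Union>A) A > 0" unfolding grank_def by simp
  then show ?thesis using simple_graph_grank_subgraph[OF G A(1)] unfolding restr_vertices_def by simp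
qed

lemma ratio_le_iff:
  fixes a b c d :: real
  assumes "a > 0" "b > 0" "c > 0" "d > 0"
  shows "a / b \<le> c / d \<longleftrightarrow> d - b \<le> (c - a) / (c / d)"
    and "a / b \<le> c / d \<longleftrightarrow> (a - b) / a \<le> (c - d) / c"
  using assms by (simp_all add: field_simps)

theorem theorem3p15:
  fixes V :: "'a set" and E :: "'a set set"
    and src tgt :: "'a set \<Rightarrow> 'a"
  assumes "simple_graph V E"
    and "E \<noteq> {}"
    and "no_isolated V E"
    and "\<forall>e\<in>E. e = {src e, tgt e}"
  shows "(uniformly_dense V E
          \<longleftrightarrow> (\<forall>A. A \<subseteq> E \<and> A \<noteq> {} \<longrightarrow>
                real (mat_rank (norm_laplacian V E))
                - real (mat_rank (norm_laplacian (restr_vertices A) A))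
                \<le> (real (card E) - real (card A)) / density V E))
       \<and> (uniformly_dense V E
          \<longleftrightarrow> (\<forall>A. A \<subseteq> E \<and> A \<noteq> {} \<longrightarrow>
                real (n0 (edge_laplacian src tgt A)) / real (card A)
                \<le> real (n0 (edge_laplacian src tgt E)) / real (card E)))"
proof -
  note G = assms(1) and orient = assms(4)
  have "restr_vertices E = V"
    using simple_graph_Union_subset[OF G] assms(3) unfolding restr_vertices_def no_isolated_def by blast
  then have rank_E: "mat_rank (norm_laplacian V E) = grank V E"
    using simple_graph_rank_norm_laplacian[OF G orient order_refl] by simp
  have pos: "real (card A) > 0" "real (grank V A) > 0" if A: "A \<subseteq> E" "A \<noteq> {}" for A
  proof -
    have "finite A" using simple_graph_finite_edges[OF G] A(1) by (rule finite_subset[rotated])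
    then show "real (card A) > 0" using A(2) by (simp add: card_gt_0_iff)
    show "real (grank V A) > 0" using simple_graph_grank_pos[OF G A] by simp
  qed
  have n0: "real (n0 (edge_laplacian src tgt A)) = real (card A) - real (grank V A)"
    if "A \<subseteq> E" for A
    using simple_graph_n0_edge_laplacian[OF G orient that] by linarith
  have "(density V A \<le> density V E \<longleftrightarrow>
          real (mat_rank (norm_laplacian V E)) - real (mat_rank (norm_laplacian (restr_vertices A) A))
            \<le> (real (card E) - real (card A)) / density V E)
      \<and> (density V A \<le> density V E \<longleftrightarrow>
          real (n0 (edge_laplacian src tgt A)) / real (card A)
            \<le> real (n0 (edge_laplacian src tgt E)) / real (card E))"
    if A: "A \<subseteq> E" "A \<noteq> {}" for A
    unfolding density_def rank_E simple_graph_rank_norm_laplacian[OF G orient A(1)]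
      n0[OF A(1)] n0[OF order_refl]
    by (intro conjI) (rule ratio_le_iff[OF pos[OF A] pos[OF order_refl assms(2)]])+
  then show ?thesis unfolding uniformly_dense_def by blast
qed

end
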